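(* Let $w'\in\mathcal{W}^e_n$ and let $(O',E')\to(O,E)$ be one application of the step $(\omega)$ during the computation of $\Omega(w')$, using the notation $o'_1|\cdots|o'_h$, $e'_1|\cdots|e'_k$, and (in cases (P'), (F')) $e'_1=r_js_j\cdots s_1$ from the definition of $(\omega)$. Let $O=o_1|\cdots|o_m$ be the Lyndon factorization of $O$, with conventions $o_i=o'_i=\infty$ for $i\le0$. Then: (i) All the Lyndon factors of $E$ are even. (ii) The Lyndon factors of $O$ are odd and pairwise distinct, and the Lyndon factorization of $O$ is $o'_1|\cdots|o'_{h-1}|o'_he'_1$ after a step of type (S'), $o'_1|\cdots|o'_{h-1}|r_js_jo'_h$ after a step of type (P'), and $o'_1|\cdots|o'_h|s_j|r_j$ after a step of type (F'). (iii) $E<o_{m-1}$. (iv) If $|o_m|\ge2$ and its standard factorization is $o_m=rs$, then the leftmost Lyndon factor $e_1$ of $E$ satisfies $e_1\le s$. (v) After a step of type (S'), the standard factorization of $o_m$ is $o_m=o'_h\cdot e'_1$. (vi) After a step of type (P'), the standard factorization of $o_m$ is $o_m=(r_js_j)\cdot o'_h$.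
   Context: Fix a finite totally ordered alphabet $A$. Words are finite sequences over $A$; $-$ is the empty word. $<$ is lexicographic order (a proper prefix is smaller than the word); $\infty$ is a formal symbol with $w<\infty$ for all words $w$. A Lyndon word is a nonempty word strictly smaller than each of its proper nonempty suffixes. Every word has a unique Lyndon factorization $w=\ell_1\cdots\ell_m$ into Lyndon words with $\ell_1\ge\dots\ge\ell_m$, written $\ell_1|\cdots|\ell_m$; the $\ell_i$ are its Lyndon factors. Odd/even refer to lengths. For a Lyndon word $\ell$ with $|\ell|\ge2$, its standard factorization is $\ell=rs$ with $s$ the longest proper suffix of $\ell$ that is Lyndon (equivalently the smallest proper nonempty suffix). $\mathcal{W}^e_n$: words of length $n$ whose Lyndon factors are all even except possibly one factor of length one. Iterated standard factorization (ISF) of a Lyndon word $\ell$, $|\ell|\ge2$, with respect to $u$ (a word or $\infty$): the unique factorization $\ell=r_js_js_{j-1}\cdots s_1$, $j\ge1$, such that (a) for every $i\in[j]$, $s_i$ is the smallest proper nonempty suffix of $r_js_j\cdots s_i$; (b) for $i\in[j-1]$, $s_i$ is even and $s_i<u$; (c) $s_j$ is odd or $u\le s_j$. Computation of $\Omega(w')$ for $w'\in\mathcal{W}^e_n$: start with $(O',E')=(-,w')$; if $n$ is odd, remove the unique length-one Lyndon factor from $E'$ (so $E'$ becomes the concatenation of the remaining factors) and set $O'$ equal to that letter. While $E'$ is nonempty, apply step $(\omega)$: let $O'=o'_1|\cdots|o'_h$ and $E'=e'_1|\cdots|e'_k$ (with $o'_h=\infty$ if $O'$ is empty). If $o'_h<e'_1$,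 update to (S') $(O'e'_1,\ e'_2\cdots e'_k)$. Otherwise let $e'_1=r_js_js_{j-1}\cdots s_1$ be the ISF of $e'_1$ with respect to $o'_h$ and update to (P') $(o'_1\cdots o'_{h-1}r_js_jo'_h,\ s_{j-1}\cdots s_1e'_2\cdots e'_k)$ if $o'_h\le s_j$, or to (F') $(O's_jr_j,\ s_{j-1}\cdots s_1e'_2\cdots e'_k)$ if $s_j<o'_h$. When $E'$ is empty, $\Omega(w')=O'$. *)

theory Defs
  imports Main
begin

definition lex_less :: "'a::linorder list \<Rightarrow> 'a list \<Rightarrow> bool" where
  "lex_less x y \<longleftrightarrow> (x, y) \<in> lexord {(a, b). a < b}"

definition lex_le :: "'a::linorder list \<Rightarrow> 'a list \<Rightarrow> bool" where
  "lex_le x y \<longleftrightarrow> x = y \<or> lex_less x y"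

text \<open>A word or infinity: None represents infinity, which is above every word.\<close>

fun ltI :: "'a::linorder list option \<Rightarrow> 'a list option \<Rightarrow> bool" where
  "ltI (Some x) (Some y) = lex_less x y"
| "ltI (Some x) None = True"
| "ltI None _ = False"

definition leI :: "'a::linorder list option \<Rightarrow> 'a list option \<Rightarrow> bool" where
  "leI u v \<longleftrightarrow> u = v \<or> ltI u v"

definition psuffix_ne :: "'a list \<Rightarrow> 'a list \<Rightarrow> bool" where
  "psuffix_ne s x \<longleftrightarrow> s \<noteq> [] \<and> (\<exists>p. p \<noteq> [] \<and> x = p @ s)"

definition lyndon :: "'a::linorder list \<Rightarrow> bool" where
  "lyndon w \<longleftrightarrow> w \<noteq> [] \<and> (\<forall>s. psuffix_ne s w \<longrightarrow> lex_less w s)"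

definition is_lfact :: "'a::linorder list list \<Rightarrow> 'a list \<Rightarrow> bool" where
  "is_lfact fs w \<longleftrightarrow> (\<forall>f\<in>set fs. lyndon f) \<and> concat fs = w
     \<and> sorted_wrt (\<lambda>a b. lex_le b a) fs"

text \<open>The (unique) Lyndon factorization of a word.\<close>
definition lfact :: "'a::linorder list \<Rightarrow> 'a list list" where
  "lfact w = (THE fs. is_lfact fs w)"

definition min_suffix :: "'a::linorder list \<Rightarrow> 'a list \<Rightarrow> bool" where
  "min_suffix x s \<longleftrightarrow> psuffix_ne s x \<and> (\<forall>t. psuffix_ne t x \<longrightarrow> lex_le s t)"

definition std_fact :: "'a::linorder list \<Rightarrow> 'a list \<Rightarrow> 'a list \<Rightarrow> bool" where
  "std_fact l r s \<longleftrightarrow> l = r @ s \<and> psuffix_ne s l \<and> lyndon s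
     \<and> (\<forall>t. psuffix_ne t l \<and> lyndon t \<longrightarrow> length t \<le> length s)"

definition We :: "nat \<Rightarrow> 'a::linorder list set" where
  "We n = {w. length w = n
     \<and> length (filter (\<lambda>f. odd (length f)) (lfact w)) \<le> 1
     \<and> (\<forall>f\<in>set (lfact w). odd (length f) \<longrightarrow> length f = 1)}"

text \<open>isf u l r ss: l = r_j s_j s_(j-1) ... s_1 is the ISF of l w.r.t. u,
  where r = r_j and ss = [s_1, ..., s_j] (so ss!(i-1) = s_i).\<close>
definition isf :: "'a::linorder list option \<Rightarrow> 'a list \<Rightarrow> 'a list \<Rightarrow> 'a list list \<Rightarrow> bool" where
  "isf u l r ss \<longleftrightarrow> ss \<noteq> [] \<and> l = r @ concat (rev ss)
     \<and> (\<forall>i<length ss. min_suffix (r @ concat (rev (drop i ss))) (ss ! i))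
     \<and> (\<forall>i<length ss - 1. even (length (ss ! i)) \<and> ltI (Some (ss ! i)) u)
     \<and> (odd (length (last ss)) \<or> leI u (Some (last ss)))"

fun lastopt :: "'a list list \<Rightarrow> 'a list option" where
  "lastopt [] = None"
| "lastopt xs = Some (last xs)"

definition omega_init :: "'a::linorder list \<Rightarrow> 'a list \<times> 'a list" where
  "omega_init w = (if odd (length w)
     then (hd (filter (\<lambda>f. length f = 1) (lfact w)),
           concat (filter (\<lambda>f. length f \<noteq> 1) (lfact w)))
     else ([], w))"

datatype step_kind = StepS | StepP | StepF

text \<open>omega_step st k r ss st2: step (omega) from state st to st2, of type k;
  in cases (P'), (F'), (r, ss) is the ISF r_j s_j ... s_1 of e'_1
  w.r.t. o'_h (ss = [s_1, ..., s_j]); in case (S') r and ss are [].\<close>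
definition omega_step :: "'a::linorder list \<times> 'a list \<Rightarrow> step_kind \<Rightarrow> 'a list \<Rightarrow> 'a list list
    \<Rightarrow> 'a list \<times> 'a list \<Rightarrow> bool" where
  "omega_step st k r ss st2 \<longleftrightarrow>
     (let Oc = fst st; Ec = snd st; os = lfact Oc; es = lfact Ec; u = lastopt os in
      Ec \<noteq> [] \<and>
      ((k = StepS \<and> ltI u (Some (hd es)) \<and> r = [] \<and> ss = []
          \<and> st2 = (Oc @ hd es, concat (tl es)))
     \<or> (k = StepP \<and> \<not> ltI u (Some (hd es)) \<and> 2 \<le> length (hd es) \<and> isf u (hd es) r ss
          \<and> leI u (Some (last ss))
          \<and> st2 = (concat (butlast os) @ r @ last ss @ last os,
                   concat (rev (butlast ss)) @ concat (tl es)))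
     \<or> (k = StepF \<and> \<not> ltI u (Some (hd es)) \<and> 2 \<le> length (hd es) \<and> isf u (hd es) r ss
          \<and> ltI (Some (last ss)) u
          \<and> st2 = (Oc @ last ss @ r,
                   concat (rev (butlast ss)) @ concat (tl es)))))"

definition omega_reach :: "'a::linorder list \<Rightarrow> 'a list \<times> 'a list \<Rightarrow> bool" where
  "omega_reach w st \<longleftrightarrow>
     (omega_init w, st) \<in> {(x, y). \<exists>k r ss. omega_step x k r ss y}\<^sup>*"

end

(* The theorem follows from an invariant of the pair (O, E) that is maintained along the whole
   computation: the Lyndon factors o_1 > ... > o_h of O are odd, the Lyndon factors of E are even and
   smaller than o_(h-1), and e_1 is at most the minimal proper suffix of o_h.  In a step of type (S')
   or (P') the last factor of O is replaced by a product u v of Lyndon words with u < v, which is again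
   a Lyndon word; the last clause of the invariant (for (S')), resp. the condition o'_h <= s_j of the
   ISF (for (P')), makes v the minimal proper suffix of u v, so that u v is its standard factorization.
   Parity turns the weak comparisons supplied by the ISF into strict ones, since an odd and an even
   word are never equal. *)

theory Submission
  imports Defs "HOL-Library.List_Lexorder"
begin

lemma lex_less_iff_less: "lex_less x y \<longleftrightarrow> x < y"
  by (simp add: lex_less_def list_less_def)

lemma lex_le_iff_le: "lex_le x y \<longleftrightarrow> x \<le> y"
  by (auto simp add: lex_le_def lex_less_iff_less list_le_def)

lemma ltI_imp_not_leI: "ltI x y \<Longrightarrow> \<not> leI y x"
  by (cases x; cases y) (auto simp: leI_def lex_less_iff_less)

lemma less_append: "t \<noteq> [] \<Longrightarrow> (x::'a::linorder list) < x @ t"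
  unfolding list_less_def by (cases t) (auto intro: lexord_append_rightI)

lemma le_append: "(x::'a::linorder list) \<le> x @ t"
  by (cases "t = []") (auto intro: less_imp_le less_append)

lemma append_less_append_iff: "p @ x < p @ y \<longleftrightarrow> (x::'a::linorder list) < y"
  unfolding list_less_def by (rule lexord_same_pref_if_irrefl) (simp add: irrefl_def)

lemma less_list_cases:
  assumes "(x::'a::linorder list) < y"
  shows "(\<exists>t. t \<noteq> [] \<and> y = x @ t) \<or> (\<forall>a b. x @ a < y @ b)"
proof -
  have "(x, y) \<in> lexord {(u, v). u < v}" using assms by (simp add: list_less_def)
  then obtain a v where h: "y = x @ a # v \<or>
      (\<exists>u a b v w. (a, b) \<in> {(u, v). u < v} \<and> x = u @ a # v \<and> y = u @ b # w)"
    unfolding lexord_def by blast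
  show ?thesis
  proof (cases "y = x @ a # v")
    case False
    then obtain u c d v w where "c < d" "x = u @ c # v" "y = u @ d # w" using h by blast
    then have "x @ a' < y @ b'" for a' b'
      unfolding list_less_def by (simp add: lexord_append_left_rightI)
    then show ?thesis by blast
  qed blast
qed

lemma less_append_append_if_longer:
  "(x::'a::linorder list) < y \<Longrightarrow> length y \<le> length x \<Longrightarrow> x @ a < y @ b"
  unfolding list_less_def by (rule lexord_sufI)

lemma le_append_right: "(v::'a::linorder list) \<le> w \<Longrightarrow> v \<le> w @ z"
  by (rule order_trans[OF _ le_append])

lemma sorted_wrt_butlast_last: "sorted_wrt R xs \<Longrightarrow> x \<in> set (butlast xs) \<Longrightarrow> R x (last xs)"
  by (cases xs rule: rev_cases) (auto simp: sorted_wrt_append)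

lemma sorted_wrt_butlast_snoc:
  "sorted_wrt R xs \<Longrightarrow> \<forall>x\<in>set (butlast xs). R x c \<Longrightarrow> sorted_wrt R (butlast xs @ [c])"
  by (cases xs rule: rev_cases) (auto simp: sorted_wrt_append)

lemma sorted_wrt_last_le: "sorted_wrt (>) xs \<Longrightarrow> x \<in> set xs \<Longrightarrow> last xs \<le> (x::'a::linorder)"
  by (cases xs rule: rev_cases) (auto simp: sorted_wrt_append)

lemma concat_butlast_last: "xs \<noteq> [] \<Longrightarrow> concat (butlast xs) @ last xs = concat xs"
  by (cases xs rule: rev_cases) auto

lemma concat_rev_drop:
  "i < length ss \<Longrightarrow> concat (rev (drop i ss)) = concat (rev (drop (Suc i) ss)) @ ss ! i"
  by (simp add: Cons_nth_drop_Suc[symmetric])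

lemma even_length_concat_iff:
  "even (length (concat fs)) \<longleftrightarrow> even (length (filter (\<lambda>f. odd (length f)) fs))"
  by (induction fs) auto

section \<open>Lyndon words and minimal suffixes\<close>

lemma lyndon_iff:
  "lyndon w \<longleftrightarrow> w \<noteq> [] \<and> (\<forall>p s. p \<noteq> [] \<longrightarrow> s \<noteq> [] \<longrightarrow> w = p @ s \<longrightarrow> w < s)"
  by (auto simp: lyndon_def psuffix_ne_def lex_less_iff_less)

lemma lyndonD: "lyndon w \<Longrightarrow> p \<noteq> [] \<Longrightarrow> s \<noteq> [] \<Longrightarrow> w = p @ s \<Longrightarrow> w < s"
  by (auto simp: lyndon_iff)

lemma lyndon_nonempty: "lyndon w \<Longrightarrow> w \<noteq> []"
  by (auto simp: lyndon_iff)

lemma lyndon_singleton: "lyndon [c]"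
proof -
  have False if "p \<noteq> []" "s \<noteq> []" "[c] = p @ s" for p s :: "'a list"
    using that by (cases p) auto
  then show ?thesis unfolding lyndon_iff by blast
qed

lemma lyndon_le_suffix: "lyndon w \<Longrightarrow> s \<noteq> [] \<Longrightarrow> w = p @ s \<Longrightarrow> w \<le> s"
  by (cases "p = []") (auto dest: lyndonD intro: less_imp_le)

lemma psuffix_ne_length: "psuffix_ne s l \<Longrightarrow> 2 \<le> length l"
proof -
  assume "psuffix_ne s l"
  then obtain p where "p \<noteq> []" "s \<noteq> []" "l = p @ s" by (auto simp: psuffix_ne_def)
  then show ?thesis by (cases p; cases s) auto
qed

lemma min_suffix_iff:
  "min_suffix x s \<longleftrightarrow> psuffix_ne s x \<and> (\<forall>t. psuffix_ne t x \<longrightarrow> s \<le> t)"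
  by (simp add: min_suffix_def lex_le_iff_le)

lemma min_suffix_lyndon:
  assumes "min_suffix x s"
  shows "lyndon s"
proof -
  obtain q where q: "q \<noteq> []" "x = q @ s" "s \<noteq> []"
    using assms by (auto simp: min_suffix_iff psuffix_ne_def)
  have "s < t" if "p \<noteq> []" "t \<noteq> []" "s = p @ t" for p t
  proof -
    have "psuffix_ne t x" using that q by (auto simp: psuffix_ne_def)
    then have "s \<le> t" using assms by (auto simp: min_suffix_iff)
    moreover have "s \<noteq> t" using that by auto
    ultimately show ?thesis by simp
  qed
  then show ?thesis using q by (auto simp: lyndon_iff)
qed

lemma min_suffix_unique: "min_suffix x s \<Longrightarrow> min_suffix x s' \<Longrightarrow> s = s'"
  by (auto simp: min_suffix_iff intro: order.antisym)

lemma min_suffix_exists: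
  assumes "2 \<le> length x"
  shows "\<exists>s. min_suffix x s"
proof -
  define S where "S = (\<lambda>i. drop i x) ` {1..<length x}"
  have S_iff: "t \<in> S \<longleftrightarrow> psuffix_ne t x" for t
  proof
    assume "t \<in> S"
    then obtain i where "1 \<le> i" "i < length x" "t = drop i x" by (auto simp: S_def)
    then show "psuffix_ne t x" unfolding psuffix_ne_def by (intro conjI exI[of _ "take i x"]) auto
  next
    assume "psuffix_ne t x"
    then obtain p where "p \<noteq> []" "t \<noteq> []" "x = p @ t" by (auto simp: psuffix_ne_def)
    then show "t \<in> S" unfolding S_def by (intro image_eqI[of _ _ "length p"]) (auto simp: Suc_le_eq)
  qed
  have fin: "finite S" and ne: "S \<noteq> {}" using assms by (auto simp: S_def)
  have "min_suffix x (Min S)"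
    unfolding min_suffix_iff using Min_in[OF fin ne] Min_le[OF fin] S_iff by blast
  then show ?thesis by blast
qed

lemma suffix_of_longer_suffix:
  assumes "p @ t = q @ (s::'a list)" "length s \<le> length t"
  shows "\<exists>z. t = z @ s"
proof -
  obtain us where "p = q @ us \<and> us @ t = s \<or> p @ us = q \<and> t = us @ s"
    using assms(1) append_eq_append_conv2[of p t q s] by blast
  then show ?thesis
  proof
    assume "p = q @ us \<and> us @ t = s"
    then have "us = []" "t = s" using assms(2) by auto
    then show ?thesis by auto
  qed blast
qed

lemma min_suffix_longest:
  assumes "min_suffix x s" "psuffix_ne t x" "lyndon t"
  shows "length t \<le> length s"
proof (rule ccontr)
  assume longer: "\<not> length t \<le> length s"
  obtain q where q: "x = q @ s" "s \<noteq> []" using assms(1) by (auto simp: min_suffix_iff psuffix_ne_def)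
  obtain p where "x = p @ t" using assms(2) by (auto simp: psuffix_ne_def)
  then obtain z where "t = z @ s" "z \<noteq> []"
    using suffix_of_longer_suffix[of p t q s] q longer by fastforce
  then have "t < s" using assms(3) q by (auto dest: lyndonD)
  moreover have "s \<le> t" using assms(1,2) by (auto simp: min_suffix_iff)
  ultimately show False by simp
qed

lemma std_fact_iff_min_suffix: "std_fact l r s \<longleftrightarrow> min_suffix l s \<and> l = r @ s"
proof
  assume std: "std_fact l r s"
  then have ps: "psuffix_ne s l" and ls: "lyndon s" and l: "l = r @ s" by (auto simp: std_fact_def)
  then obtain s0 where s0: "min_suffix l s0" using min_suffix_exists psuffix_ne_length by blast
  then have "psuffix_ne s0 l" by (simp add: min_suffix_iff)
  then have "length s0 \<le> length s" using std min_suffix_lyndon[OF s0] by (simp add: std_fact_def)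
  moreover have "length s \<le> length s0" using min_suffix_longest[OF s0 ps ls] .
  moreover obtain q where "l = q @ s0" using s0 by (auto simp: min_suffix_iff psuffix_ne_def)
  ultimately have "s = s0" using l append_eq_append_conv[of r q s s0] by (metis order_antisym)
  then show "min_suffix l s \<and> l = r @ s" using s0 l by simp
next
  assume ms: "min_suffix l s \<and> l = r @ s"
  then have "psuffix_ne s l" "lyndon s" using min_suffix_lyndon by (auto simp: min_suffix_iff)
  moreover have "length t \<le> length s" if "psuffix_ne t l \<and> lyndon t" for t
    using min_suffix_longest ms that by blast
  ultimately show "std_fact l r s" using ms by (simp add: std_fact_def)
qed

lemma append_less_lyndon_right:
  assumes "u \<noteq> []" "(u::'a::linorder list) < v" "lyndon v"
  shows "u @ v < v"
  using less_list_cases[OF assms(2)]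
proof
  assume "\<exists>t. t \<noteq> [] \<and> v = u @ t"
  then obtain t where t: "t \<noteq> []" "v = u @ t" by blast
  then have "v < t" using assms by (auto dest: lyndonD)
  then show ?thesis using t by (simp add: append_less_append_iff)
next
  assume "\<forall>a b. u @ a < v @ b"
  then have "u @ v < v @ []" by blast
  then show ?thesis by simp
qed

lemma lyndon_append:
  assumes "lyndon u" "lyndon v" "(u::'a::linorder list) < v"
  shows "lyndon (u @ v)"
proof -
  have uv_v: "u @ v < v" using append_less_lyndon_right[OF lyndon_nonempty[OF assms(1)] assms(3,2)] .
  have "u @ v < s" if "p \<noteq> []" "s \<noteq> []" "u @ v = p @ s" for p s
  proof -
    from that(3) obtain us where "u = p @ us \<and> us @ v = s \<or> u @ us = p \<and> v = us @ s"
      using append_eq_append_conv2[of u v p s] by blast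
    then show ?thesis
    proof
      assume h: "u = p @ us \<and> us @ v = s"
      show ?thesis
      proof (cases "us = []")
        case False
        have "u < us" using lyndonD[OF assms(1) that(1) False] h by blast
        moreover have "length us \<le> length u" using h by simp
        ultimately have "u @ v < us @ v" by (rule less_append_append_if_longer)
        then show ?thesis using h by simp
      qed (use h uv_v in simp)
    next
      assume h: "u @ us = p \<and> v = us @ s"
      have "v \<le> s" using lyndon_le_suffix[OF assms(2) that(2)] h by simp
      then show ?thesis using uv_v by simp
    qed
  qed
  then show ?thesis using lyndon_nonempty[OF assms(1)] by (auto simp: lyndon_iff)
qed

lemma min_suffix_append:
  assumes "lyndon u" "lyndon v" "(u::'a::linorder list) < v" "\<forall>s. min_suffix u s \<longrightarrow> v \<le> s"
  shows "min_suffix (u @ v) v"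
proof -
  have "v \<le> t" if "psuffix_ne t (u @ v)" for t
  proof -
    from that obtain p where p: "p \<noteq> []" "t \<noteq> []" "u @ v = p @ t" by (auto simp: psuffix_ne_def)
    then obtain us where "u = p @ us \<and> us @ v = t \<or> u @ us = p \<and> v = us @ t"
      by (auto simp: append_eq_append_conv2)
    then show ?thesis
    proof
      assume h: "u = p @ us \<and> us @ v = t"
      show ?thesis
      proof (cases "us = []")
        case False
        then have ps: "psuffix_ne us u" using h p by (auto simp: psuffix_ne_def)
        then obtain s0 where s0: "min_suffix u s0" using min_suffix_exists psuffix_ne_length by blast
        then have "v \<le> us" using assms(4) ps by (auto simp: min_suffix_iff intro: order_trans)
        then show ?thesis using le_append_right h by blast
      qed (use h in simp)
    next
      assume "u @ us = p \<and> v = us @ t"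
      then show ?thesis using lyndon_le_suffix[OF assms(2) p(2)] by simp
    qed
  qed
  moreover have "psuffix_ne v (u @ v)" using assms lyndon_nonempty by (auto simp: psuffix_ne_def)
  ultimately show ?thesis by (auto simp: min_suffix_iff)
qed

lemma min_suffix_le_min_suffix_prefix:
  assumes "min_suffix (r @ s') s'" "min_suffix r s"
  shows "s' \<le> s"
proof (rule ccontr)
  assume "\<not> s' \<le> s"
  then have "s < s'" by simp
  obtain q where q: "r = q @ s" "q \<noteq> []" "s \<noteq> []"
    using assms(2) by (auto simp: min_suffix_iff psuffix_ne_def)
  then have "psuffix_ne (s @ s') (r @ s')" by (auto simp: psuffix_ne_def)
  then have "s' \<le> s @ s'" using assms(1) by (auto simp: min_suffix_iff)
  moreover have "s @ s' < s'"
    using append_less_lyndon_right[OF q(3) \<open>s < s'\<close> min_suffix_lyndon[OF assms(1)]] .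
  ultimately show False by simp
qed

lemma lyndon_min_suffix_prefix:
  assumes "lyndon (r @ s)" "min_suffix (r @ s) s"
  shows "lyndon r"
proof -
  have sn: "s \<noteq> []" and rn: "r \<noteq> []" using assms(2) by (auto simp: min_suffix_iff psuffix_ne_def)
  have "r < t" if "p \<noteq> []" "t \<noteq> []" "r = p @ t" for p t
  proof (rule ccontr)
    assume "\<not> r < t"
    moreover have "t \<noteq> r" using that by auto
    ultimately have "t < r" by simp
    have rs_ts: "r @ s < t @ s" using lyndonD[OF assms(1) that(1), of "t @ s"] that sn by simp
    from less_list_cases[OF \<open>t < r\<close>] show False
    proof
      assume "\<exists>z. z \<noteq> [] \<and> r = t @ z"
      then obtain z where z: "z \<noteq> []" "r = t @ z" by blast
      then have "z @ s < s" using rs_ts by (simp add: append_less_append_iff)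
      moreover have "psuffix_ne (z @ s) (r @ s)" using z that sn by (auto simp: psuffix_ne_def)
      then have "s \<le> z @ s" using assms(2) by (auto simp: min_suffix_iff)
      ultimately show False by simp
    next
      assume "\<forall>a b. t @ a < r @ b"
      then have "t @ s < r @ s" by blast
      then show False using rs_ts by simp
    qed
  qed
  then show ?thesis using rn by (auto simp: lyndon_iff)
qed

lemma concat_less_lyndon:
  assumes "lyndon z" "\<forall>f\<in>set fs. f < z"
  shows "concat fs < (z::'a::linorder list)"
proof -
  \<comment> \<open>Generalized to the nonempty suffixes y of z, each of which is at least z.\<close>
  have "concat fs < y" if "\<forall>f\<in>set fs. f < z" "y \<noteq> []" "\<exists>p. z = p @ y" for y
    using that
  proof (induction fs arbitrary: y)
    case Nil
    then show ?case by (cases y) auto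
  next
    case (Cons f fs)
    have "z \<le> y" using Cons.prems(2,3) lyndon_le_suffix[OF assms(1)] by blast
    then have "f < y" using Cons.prems(1) by (auto intro: less_le_trans)
    from less_list_cases[OF this] show ?case
    proof
      assume "\<exists>y'. y' \<noteq> [] \<and> y = f @ y'"
      then obtain y' where y': "y' \<noteq> []" "y = f @ y'" by blast
      then have "concat fs < y'" using Cons by (metis append.assoc list.set_intros(2))
      then show ?thesis using y' by (simp add: append_less_append_iff)
    next
      assume "\<forall>a b. f @ a < y @ b"
      then have "f @ concat fs < y @ []" by blast
      then show ?thesis by simp
    qed
  qed
  then show ?thesis using assms lyndon_nonempty by blast
qed

lemma append_less_lyndon: "lyndon z \<Longrightarrow> x < z \<Longrightarrow> y < z \<Longrightarrow> x @ y < (z::'a::linorder list)"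
  using concat_less_lyndon[of z "[x, y]"] by simp

lemma lyndon_prefix_less_suffix:
  assumes "lyndon (r @ s)" "r \<noteq> []" "s \<noteq> []"
  shows "r < (s::'a::linorder list)"
proof -
  have "r < r @ s" using less_append[OF \<open>s \<noteq> []\<close>] .
  also have "\<dots> < s" using lyndonD[OF assms(1,2,3)] by simp
  finally show ?thesis .
qed

section \<open>Existence and uniqueness of the Lyndon factorization\<close>

lemma is_lfact_iff:
  "is_lfact fs w \<longleftrightarrow> (\<forall>f\<in>set fs. lyndon f) \<and> concat fs = w \<and> sorted_wrt (\<lambda>a b. b \<le> a) fs"
  by (simp add: is_lfact_def lex_le_iff_le)

lemma concat_prefix_decomp:
  assumes "\<forall>f\<in>set fs. f \<noteq> []" "concat fs = p @ z" "p \<noteq> []"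
  shows "\<exists>i q y. i < length fs \<and> q \<noteq> [] \<and> fs ! i = q @ y \<and> p = concat (take i fs) @ q"
  using assms
proof (induction fs arbitrary: p)
  case Nil then show ?case by simp
next
  case (Cons f fs)
  from Cons.prems(2) have "f @ concat fs = p @ z" by simp
  then obtain us where "f = p @ us \<and> us @ concat fs = z \<or> f @ us = p \<and> concat fs = us @ z"
    using append_eq_append_conv2[of f "concat fs" p z] by blast
  then show ?case
  proof
    assume h: "f = p @ us \<and> us @ concat fs = z"
    show ?thesis
      by (rule exI[of _ 0], rule exI[of _ p], rule exI[of _ us]) (use h Cons.prems in auto)
  next
    assume h: "f @ us = p \<and> concat fs = us @ z"
    show ?thesis
    proof (cases "us = []")
      case True
      show ?thesis
        by (rule exI[of _ 0], rule exI[of _ f], rule exI[of _ "[]"]) (use h True Cons.prems in auto)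
    next
      case False
      from Cons.IH[of us] Cons.prems h False obtain i q y where
        "i < length fs" "q \<noteq> []" "fs ! i = q @ y" "us = concat (take i fs) @ q" by auto
      then show ?thesis using h
        by (intro exI[of _ "Suc i"] exI[of _ q] exI[of _ y]) auto
    qed
  qed
qed

lemma is_lfact_first_longest:
  assumes "is_lfact (f # fs) w" "lyndon p" "w = p @ z"
  shows "length p \<le> length f"
proof (rule ccontr)
  assume "\<not> length p \<le> length f"
  have lf: "\<forall>g\<in>set (f # fs). lyndon g" "concat (f # fs) = w" "sorted_wrt (\<lambda>a b. b \<le> a) (f # fs)"
    using assms(1) by (auto simp: is_lfact_iff)
  have fn: "f \<noteq> []" using lf lyndon_nonempty by auto
  from lf(2) assms(3) have "f @ concat fs = p @ z" by simp
  then obtain us where "f = p @ us \<and> us @ concat fs = z \<or> f @ us = p \<and> concat fs = us @ z"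
    using append_eq_append_conv2[of f "concat fs" p z] by blast
  moreover have "\<not> (f = p @ us)" using \<open>\<not> length p \<le> length f\<close> by auto
  ultimately have h: "f @ us = p" "concat fs = us @ z" by auto
  then have usn: "us \<noteq> []" using \<open>\<not> length p \<le> length f\<close> by auto
  have "\<forall>g\<in>set fs. g \<noteq> []" using lf lyndon_nonempty by auto
  from concat_prefix_decomp[OF this h(2) usn] obtain i q y where
    iq: "i < length fs" "q \<noteq> []" "fs ! i = q @ y" "us = concat (take i fs) @ q" by blast
  have "p = (f @ concat (take i fs)) @ q" using h iq by simp
  then have "p < q" using lyndonD[OF assms(2) _ iq(2)] fn by auto
  moreover have "q \<le> fs ! i" using iq le_append by metis
  moreover have "fs ! i \<le> f" using lf(3) iq(1) by (auto simp: set_conv_nth)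
  moreover have "f \<le> p" using h le_append by metis
  ultimately show False by simp
qed

lemma is_lfact_tail: "is_lfact (f # fs) w \<Longrightarrow> is_lfact fs (concat fs)"
  by (auto simp: is_lfact_iff)

lemma is_lfact_unique: "is_lfact fs w \<Longrightarrow> is_lfact gs w \<Longrightarrow> fs = gs"
proof (induction fs arbitrary: gs w)
  case Nil
  then have "concat gs = []" "\<forall>g\<in>set gs. lyndon g" by (auto simp: is_lfact_iff)
  then show ?case using lyndon_nonempty by (cases gs) auto
next
  case (Cons f fs)
  have "f \<noteq> []" "w = f @ concat fs" using Cons.prems(1) lyndon_nonempty by (auto simp: is_lfact_iff)
  then have "w \<noteq> []" by simp
  then obtain g gs' where gs: "gs = g # gs'" using Cons.prems by (cases gs) (auto simp: is_lfact_iff)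
  have lg: "lyndon g" "lyndon f" using Cons.prems gs by (auto simp: is_lfact_iff)
  have wg: "w = g @ concat gs'" "w = f @ concat fs" using Cons.prems gs by (auto simp: is_lfact_iff)
  have "length g \<le> length f" using is_lfact_first_longest[OF Cons.prems(1) lg(1) wg(1)] .
  moreover have "length f \<le> length g" using is_lfact_first_longest[OF Cons.prems(2)[unfolded gs] lg(2) wg(2)] .
  ultimately have "length f = length g" by simp
  then have fg: "f = g" "concat fs = concat gs'" using wg append_eq_append_conv[of f g "concat fs" "concat gs'"] by auto
  have "fs = gs'"
    using Cons.IH[OF is_lfact_tail[OF Cons.prems(1)]] is_lfact_tail[OF Cons.prems(2)[unfolded gs]] fg by simp
  then show ?case using fg gs by simp
qed

lemma longest_lyndon_prefix_ge:
  assumes "lyndon p" "lyndon g" "w = p @ g @ z"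
    and longest: "\<And>q y. lyndon q \<Longrightarrow> w = q @ y \<Longrightarrow> length q \<le> length p"
  shows "g \<le> p"
proof (rule ccontr)
  assume "\<not> g \<le> p"
  then have "lyndon (p @ g)" using lyndon_append[OF assms(1,2)] by simp
  then have "length (p @ g) \<le> length p" using longest[of "p @ g" z] \<open>w = p @ g @ z\<close> by simp
  then show False using lyndon_nonempty[OF \<open>lyndon g\<close>] by simp
qed

text \<open>The first factor is the longest Lyndon prefix.\<close>

lemma is_lfact_exists: "\<exists>fs. is_lfact fs w"
proof (induction "length w" arbitrary: w rule: less_induct)
  case less
  show ?case
  proof (cases "w = []")
    case True
    then show ?thesis by (intro exI[of _ "[]"]) (simp add: is_lfact_iff)
  next
    case False
    define P where "P = {i. 1 \<le> i \<and> i \<le> length w \<and> lyndon (take i w)}"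
    have "finite P" by (auto simp: P_def)
    moreover have "1 \<in> P" using False lyndon_singleton by (cases w) (auto simp: P_def)
    ultimately have m: "Max P \<in> P" and m_max: "\<And>i. i \<in> P \<Longrightarrow> i \<le> Max P"
      using Max_in Max_ge by blast+
    define p where "p = take (Max P) w"
    define z where "z = drop (Max P) w"
    have lp: "lyndon p" and len_p: "length p = Max P" using m by (auto simp: P_def p_def)
    have wpz: "w = p @ z" by (simp add: p_def z_def)
    have longest: "length q \<le> length p" if "lyndon q" "w = q @ y" for q y
      using m_max[of "length q"] that lyndon_nonempty[OF that(1)] len_p by (auto simp: P_def Suc_le_eq)
    have "length z < length w" using m by (auto simp: z_def P_def)
    then obtain gs where gs: "is_lfact gs z" using less by blast
    have "\<forall>g\<in>set gs. g \<le> p"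
    proof (cases gs)
      case (Cons g1 rest)
      then have "g1 \<le> p"
        using longest_lyndon_prefix_ge[OF lp _ _ longest] gs wpz by (auto simp: is_lfact_iff)
      then show ?thesis using gs Cons by (auto simp: is_lfact_iff)
    qed simp
    then have "is_lfact (p # gs) w" using gs lp wpz by (auto simp: is_lfact_iff)
    then show ?thesis by blast
  qed
qed

lemma lfact_eqI: "is_lfact fs w \<Longrightarrow> lfact w = fs"
  unfolding lfact_def using is_lfact_unique by blast

lemma is_lfact_lfact: "is_lfact (lfact w) w"
  using is_lfact_exists[of w] lfact_eqI by metis

lemma concat_lfact: "concat (lfact w) = w"
  using is_lfact_lfact[of w] by (simp add: is_lfact_iff)

lemma lfact_Cons_if_nonempty:
  assumes "w \<noteq> []"
  obtains e es where "lfact w = e # es"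
  using assms concat_lfact[of w] by (cases "lfact w") auto

section \<open>Iterated standard factorization\<close>

text \<open>With ss = [s_1, ..., s_j], the word r @ concat (rev (drop i ss)) is r_j s_j ... s_(i+1).\<close>

lemma isf_min_suffix:
  "isf u l r ss \<Longrightarrow> i < length ss \<Longrightarrow> min_suffix (r @ concat (rev (drop i ss))) (ss ! i)"
  by (simp add: isf_def)

lemma isf_lyndon_prefix:
  assumes isf: "isf u l r ss" and "lyndon l" and "i \<le> length ss"
  shows "lyndon (r @ concat (rev (drop i ss)))"
  using \<open>i \<le> length ss\<close>
proof (induction i)
  case 0
  then show ?case using isf \<open>lyndon l\<close> by (simp add: isf_def)
next
  case (Suc i)
  then have i: "i < length ss" by simp
  have "lyndon ((r @ concat (rev (drop (Suc i) ss))) @ ss ! i)"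
    using Suc.IH i by (simp add: concat_rev_drop)
  moreover have "min_suffix ((r @ concat (rev (drop (Suc i) ss))) @ ss ! i) (ss ! i)"
    using isf_min_suffix[OF isf i] i by (simp add: concat_rev_drop)
  ultimately show ?case by (rule lyndon_min_suffix_prefix)
qed

lemma isf_lyndon_factor: "isf u l r ss \<Longrightarrow> s \<in> set ss \<Longrightarrow> lyndon s"
  by (metis in_set_conv_nth isf_min_suffix min_suffix_lyndon)

lemma isf_sorted:
  assumes isf: "isf u l r ss"
  shows "sorted ss"
  unfolding sorted_iff_nth_Suc
proof (intro allI impI)
  fix i assume "Suc i < length ss"
  then have "min_suffix ((r @ concat (rev (drop (Suc i) ss))) @ ss ! i) (ss ! i)"
    using isf_min_suffix[OF isf, of i] by (simp add: concat_rev_drop)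
  then show "ss ! i \<le> ss ! Suc i"
    using min_suffix_le_min_suffix_prefix isf_min_suffix[OF isf \<open>Suc i < length ss\<close>] by blast
qed

lemma isf_less_factor:
  assumes isf: "isf u l r ss" and "lyndon l" and "s \<in> set ss"
  shows "l < s"
proof -
  have ss: "ss \<noteq> []" "l = r @ concat (rev ss)" using isf by (auto simp: isf_def)
  then have "psuffix_ne (ss ! 0) l" using isf_min_suffix[OF isf, of 0] by (simp add: min_suffix_iff)
  then have "l < ss ! 0" using \<open>lyndon l\<close> by (simp add: lyndon_def lex_less_iff_less)
  also have "ss ! 0 \<le> s"
    using isf_sorted[OF isf] \<open>s \<in> set ss\<close> by (auto simp: in_set_conv_nth intro: sorted_nth_mono)
  finally show ?thesis .
qed

lemma isf_split_last:
  assumes "isf u l r ss"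
  shows "l = (r @ last ss) @ concat (rev (butlast ss))"
  using assms by (cases ss rule: rev_cases) (auto simp: isf_def)

lemma isf_last_min_suffix: "isf u l r ss \<Longrightarrow> min_suffix (r @ last ss) (last ss)"
  using isf_min_suffix[of u l r ss "length ss - 1"]
  by (cases ss rule: rev_cases) (auto simp: isf_def nth_append)

lemma isf_lyndon_last:
  assumes "isf u l r ss" and "lyndon l"
  shows "lyndon (r @ last ss)" and "lyndon r"
proof -
  show "lyndon (r @ last ss)"
    using isf_lyndon_prefix[OF assms, of "length ss - 1"] assms(1)
    by (cases ss rule: rev_cases) (auto simp: isf_def)
  show "lyndon r" using isf_lyndon_prefix[OF assms, of "length ss"] by simp
qed

lemma isf_butlast: "isf u l r ss \<Longrightarrow> s \<in> set (butlast ss) \<Longrightarrow> even (length s) \<and> ltI (Some s) u"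
  by (auto simp: isf_def in_set_conv_nth nth_butlast)

lemma isf_even_last:
  assumes isf: "isf u l r ss" and "even (length l)"
  shows "even (length (r @ last ss))"
proof -
  have "even (length (concat (rev (butlast ss))))"
    using isf_butlast[OF isf] by (auto simp: even_length_concat_iff filter_empty_conv)
  then show ?thesis using \<open>even (length l)\<close> isf_split_last[OF isf]
    by (metis even_add length_append)
qed

lemma isf_remainder_sorted:
  assumes isf: "isf u e r ss" and "lyndon e" and "\<forall>f\<in>set es. f \<le> e" and "sorted_wrt (\<ge>) es"
  shows "sorted_wrt (\<ge>) (rev (butlast ss) @ es)"
proof -
  have "sorted (butlast ss)" using isf_sorted[OF isf] by (simp add: sorted_butlast)
  moreover have "f \<le> s" if "s \<in> set (butlast ss)" "f \<in> set es" for s f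
    using isf_less_factor[OF isf \<open>lyndon e\<close> in_set_butlastD[OF that(1)]] assms(3) that(2) by fastforce
  ultimately show ?thesis using assms(4) by (auto simp: sorted_wrt_append sorted_wrt_rev)
qed

lemma isf_remainder_less_last:
  assumes isf: "isf u e r ss" and "lyndon e" and "odd (length (last ss))" and "\<forall>g\<in>set es. g \<le> e"
  shows "\<forall>g\<in>set (rev (butlast ss) @ es). g < last ss"
proof
  fix g assume "g \<in> set (rev (butlast ss) @ es)"
  then consider "g \<in> set (butlast ss)" | "g \<in> set es" by auto
  then show "g < last ss"
  proof cases
    case 1
    then have "g \<le> last ss" using sorted_wrt_butlast_last[OF isf_sorted[OF isf]] by blast
    moreover have "g \<noteq> last ss" using isf_butlast[OF isf 1] assms(3) by auto
    ultimately show ?thesis by simp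
  next
    case 2
    have "ss \<noteq> []" using isf by (simp add: isf_def)
    have "g \<le> e" using 2 assms(4) by blast
    also have "e < last ss" using isf_less_factor[OF isf \<open>lyndon e\<close>] \<open>ss \<noteq> []\<close> by simp
    finally show ?thesis .
  qed
qed

section \<open>The invariant of the computation of Omega\<close>

text \<open>The invariant is stated on the lists os and es of Lyndon factors of O and E. Its fifth clause
  is E < o_(h-1) stated factorwise, which is equivalent because o_(h-1) is a Lyndon word.\<close>

definition omega_inv :: "'a::linorder list list \<Rightarrow> 'a list list \<Rightarrow> bool" where
  "omega_inv os es \<longleftrightarrow>
     (\<forall>f\<in>set os. lyndon f \<and> odd (length f)) \<and> sorted_wrt (>) os
   \<and> (\<forall>e\<in>set es. lyndon e \<and> even (length e)) \<and> sorted_wrt (\<ge>) es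
   \<and> (\<forall>f\<in>set (butlast os). \<forall>e\<in>set es. e < f)
   \<and> (os \<noteq> [] \<longrightarrow> es \<noteq> [] \<longrightarrow> (\<forall>s. min_suffix (last os) s \<longrightarrow> hd es \<le> s))"

lemma omega_inv_lfact:
  assumes "omega_inv os es"
  shows "lfact (concat os) = os" and "lfact (concat es) = es"
proof -
  have "sorted_wrt (>) os" "\<forall>f\<in>set os. lyndon f" "\<forall>e\<in>set es. lyndon e" "sorted_wrt (\<ge>) es"
    using assms by (simp_all add: omega_inv_def)
  moreover from this(1) have "sorted_wrt (\<ge>) os" by (rule sorted_wrt_mono_rel[rotated]) simp
  ultimately show "lfact (concat os) = os" and "lfact (concat es) = es"
    by (simp_all add: lfact_eqI is_lfact_iff)
qed

lemma omega_inv_ConsD: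
  assumes "omega_inv os (e # es)"
  shows "\<forall>f\<in>set os. lyndon f \<and> odd (length f)" and "sorted_wrt (>) os"
    and "lyndon e" and "even (length e)"
    and "\<forall>g\<in>set es. lyndon g \<and> even (length g) \<and> g \<le> e" and "sorted_wrt (\<ge>) es"
    and "\<forall>f\<in>set (butlast os). e < f \<and> (\<forall>g\<in>set es. g < f)"
    and "os \<noteq> [] \<Longrightarrow> min_suffix (last os) s \<Longrightarrow> e \<le> s"
  using assms by (auto simp: omega_inv_def)

lemma omega_inv_isf_remainder:
  assumes inv: "omega_inv os (e # es)" and isf: "isf u e r ss"
  shows "\<forall>g\<in>set (rev (butlast ss) @ es). lyndon g \<and> even (length g)"
    and "sorted_wrt (\<ge>) (rev (butlast ss) @ es)"
proof -
  note inv = omega_inv_ConsD[OF inv]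
  show "\<forall>g\<in>set (rev (butlast ss) @ es). lyndon g \<and> even (length g)"
    using inv(5) isf_butlast[OF isf] isf_lyndon_factor[OF isf] by (auto dest: in_set_butlastD)
  show "sorted_wrt (\<ge>) (rev (butlast ss) @ es)"
    using isf_remainder_sorted[OF isf inv(3)] inv(5,6) by blast
qed

lemma omega_inv_step_S:
  assumes inv: "omega_inv os (e # es)" and "os \<noteq> []" and "last os < e"
  shows "omega_inv (butlast os @ [last os @ e]) es" and "min_suffix (last os @ e) e"
proof -
  let ?o = "last os"
  note inv = omega_inv_ConsD[OF inv]
  have o: "lyndon ?o" "odd (length ?o)" using inv(1) \<open>os \<noteq> []\<close> by auto
  show ms: "min_suffix (?o @ e) e"
    using min_suffix_append[OF o(1) inv(3) \<open>?o < e\<close>] inv(8) \<open>os \<noteq> []\<close> by blast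
  have "\<forall>f\<in>set (butlast os). ?o @ e < f"
    using inv(1,7) sorted_wrt_butlast_last[OF inv(2)]
    by (auto intro!: append_less_lyndon dest: in_set_butlastD)
  then have "sorted_wrt (>) (butlast os @ [?o @ e])" using sorted_wrt_butlast_snoc[OF inv(2)] by blast
  moreover have "hd es \<le> s" if "es \<noteq> []" "min_suffix (?o @ e) s" for s
    using inv(5) that min_suffix_unique[OF that(2) ms] by (cases es) auto
  moreover have "lyndon (?o @ e)" using lyndon_append[OF o(1) inv(3) \<open>?o < e\<close>] .
  ultimately show "omega_inv (butlast os @ [?o @ e]) es"
    unfolding omega_inv_def using inv(1,3-7) o by (auto dest: in_set_butlastD)
qed

lemma omega_inv_step_P:
  assumes inv: "omega_inv os (e # es)" and "os \<noteq> []" and "e \<le> last os"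
    and isf: "isf (Some (last os)) e r ss" and "last os \<le> last ss"
  shows "omega_inv (butlast os @ [r @ last ss @ last os]) (rev (butlast ss) @ es)"
    and "min_suffix (r @ last ss @ last os) (last os)"
proof -
  let ?o = "last os" and ?x = "r @ last ss" and ?L = "rev (butlast ss) @ es"
  note rest = omega_inv_isf_remainder[OF inv isf]
  note inv = omega_inv_ConsD[OF inv]
  have o: "lyndon ?o" "odd (length ?o)" using inv(1) \<open>os \<noteq> []\<close> by auto
  have x: "lyndon ?x" "min_suffix ?x (last ss)" "even (length ?x)"
    using isf_last_min_suffix[OF isf] isf_lyndon_last[OF isf inv(3)] isf_even_last[OF isf inv(4)] by auto
  have "?x \<le> e" using isf_split_last[OF isf] le_append by metis
  have "?x < ?o"
  proof -
    have "?x \<le> ?o" using \<open>?x \<le> e\<close> \<open>e \<le> ?o\<close> by simp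
    moreover have "?x \<noteq> ?o" using x(3) o(2) by metis
    ultimately show ?thesis by simp
  qed
  have "min_suffix (?x @ ?o) ?o"
    using min_suffix_append[OF x(1) o(1) \<open>?x < ?o\<close>] min_suffix_unique[OF x(2)] \<open>?o \<le> last ss\<close>
    by blast
  then show ms: "min_suffix (r @ last ss @ ?o) ?o" by simp
  have "\<forall>f\<in>set (butlast os). ?x @ ?o < f"
  proof
    fix f assume f: "f \<in> set (butlast os)"
    then have "?x < f" using \<open>?x \<le> e\<close> inv(7) by (auto intro: le_less_trans)
    moreover have "lyndon f" using inv(1) f by (auto dest: in_set_butlastD)
    ultimately show "?x @ ?o < f" using append_less_lyndon sorted_wrt_butlast_last[OF inv(2) f] by blast
  qed
  then have "sorted_wrt (>) (butlast os @ [r @ last ss @ ?o])"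
    using sorted_wrt_butlast_snoc[OF inv(2)] by simp
  moreover have L_le: "\<forall>g\<in>set ?L. g \<le> ?o"
    using isf_butlast[OF isf] inv(5) \<open>e \<le> ?o\<close> by (fastforce simp: lex_less_iff_less intro: order_trans)
  moreover have "\<forall>f\<in>set (butlast os). \<forall>g\<in>set ?L. g < f"
    using L_le inv(2) sorted_wrt_butlast_last by (fastforce intro: le_less_trans)
  moreover have "hd ?L \<le> s" if "?L \<noteq> []" "min_suffix (r @ last ss @ ?o) s" for s
    using bspec[OF L_le hd_in_set[OF that(1)]] min_suffix_unique[OF that(2) ms] by simp
  moreover have "lyndon (r @ last ss @ ?o)" using lyndon_append[OF x(1) o(1) \<open>?x < ?o\<close>] by simp
  moreover have "odd (length (r @ last ss @ ?o))" using x(3) o(2) by simp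
  ultimately show "omega_inv (butlast os @ [r @ last ss @ ?o]) ?L"
    unfolding omega_inv_def using inv(1) rest by (auto dest: in_set_butlastD)
qed

lemma omega_inv_step_F:
  assumes inv: "omega_inv os (e # es)" and isf: "isf (lastopt os) e r ss"
    and less_last: "ltI (Some (last ss)) (lastopt os)"
  shows "omega_inv (os @ [last ss, r]) (rev (butlast ss) @ es)"
proof -
  let ?s = "last ss" and ?L = "rev (butlast ss) @ es"
  note rest = omega_inv_isf_remainder[OF inv isf]
  note inv = omega_inv_ConsD[OF inv]
  have "ss \<noteq> []" using isf by (simp add: isf_def)
  have s: "lyndon ?s" "odd (length ?s)"
    using isf_lyndon_factor[OF isf] \<open>ss \<noteq> []\<close> ltI_imp_not_leI[OF less_last] isf
    by (auto simp: isf_def)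
  have x: "lyndon (r @ ?s)" "min_suffix (r @ ?s) ?s" "even (length (r @ ?s))" "lyndon r"
    using isf_last_min_suffix[OF isf] isf_lyndon_last[OF isf inv(3)] isf_even_last[OF isf inv(4)] by auto
  have r_odd: "odd (length r)" using x(3) s(2) by simp
  have "r < ?s" using lyndon_prefix_less_suffix[OF x(1)] lyndon_nonempty x(4) s(1) by blast
  have s_less: "?s < f" if "f \<in> set os" for f
  proof -
    have "?s < last os" using less_last \<open>f \<in> set os\<close> by (cases os) (auto simp: lex_less_iff_less)
    also have "last os \<le> f" using sorted_wrt_last_le[OF inv(2) that] .
    finally show ?thesis .
  qed
  then have "sorted_wrt (>) (os @ [?s, r])"
    using inv(2) \<open>r < ?s\<close> by (auto simp: sorted_wrt_append intro: less_trans)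
  moreover have L_less: "\<forall>g\<in>set ?L. g < ?s"
    using isf_remainder_less_last[OF isf inv(3) s(2)] inv(5) by blast
  moreover have "\<forall>f\<in>set os \<union> {?s}. \<forall>g\<in>set ?L. g < f"
    using L_less s_less by (fastforce intro: less_trans)
  moreover have "hd ?L \<le> t" if "?L \<noteq> []" "min_suffix r t" for t
  proof -
    have "hd ?L < ?s" using bspec[OF L_less hd_in_set[OF that(1)]] .
    also have "?s \<le> t" using min_suffix_le_min_suffix_prefix[OF x(2) that(2)] .
    finally show ?thesis by simp
  qed
  ultimately show ?thesis
    unfolding omega_inv_def using inv(1) rest s x(4) r_odd by (auto simp: butlast_append)
qed

lemma lastopt_nonempty: "os \<noteq> [] \<Longrightarrow> lastopt os = Some (last os)"
  by (cases os) auto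

lemma omega_step_S:
  assumes inv: "omega_inv (lfact Oc') (lfact Ec')"
    and step: "omega_step (Oc', Ec') StepS r ss (Oc, Ec)"
  shows "omega_inv (lfact Oc) (lfact Ec)"
    and "lfact Oc = butlast (lfact Oc') @ [last (lfact Oc') @ hd (lfact Ec')]"
    and "std_fact (last (lfact Oc)) (last (lfact Oc')) (hd (lfact Ec'))"
proof -
  let ?os = "lfact Oc'"
  have "Ec' \<noteq> []" using step by (simp add: omega_step_def Let_def)
  then obtain e es where es: "lfact Ec' = e # es" by (rule lfact_Cons_if_nonempty)
  then have less: "ltI (lastopt ?os) (Some e)" and "Oc = Oc' @ e" "Ec = concat es"
    using step by (simp_all add: omega_step_def Let_def)
  then have "?os \<noteq> []" by (cases ?os) auto
  then have "last ?os < e" using less by (simp add: lastopt_nonempty lex_less_iff_less)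
  note new = omega_inv_step_S[OF inv[unfolded es] \<open>?os \<noteq> []\<close> this]
  have "Oc = concat (butlast ?os @ [last ?os @ e])"
    using \<open>Oc = Oc' @ e\<close> concat_butlast_last[OF \<open>?os \<noteq> []\<close>] by (simp add: concat_lfact)
  then have lfact_Oc: "lfact Oc = butlast ?os @ [last ?os @ e]" using omega_inv_lfact(1)[OF new(1)] by simp
  show "omega_inv (lfact Oc) (lfact Ec)"
    using new(1) omega_inv_lfact(2)[OF new(1)] lfact_Oc \<open>Ec = concat es\<close> by simp
  show "lfact Oc = butlast ?os @ [last ?os @ hd (lfact Ec')]" using lfact_Oc es by simp
  show "std_fact (last (lfact Oc)) (last ?os) (hd (lfact Ec'))"
    using new(2) lfact_Oc es by (simp add: std_fact_iff_min_suffix)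
qed

lemma omega_step_P:
  assumes inv: "omega_inv (lfact Oc') (lfact Ec')"
    and step: "omega_step (Oc', Ec') StepP r ss (Oc, Ec)"
  shows "omega_inv (lfact Oc) (lfact Ec)"
    and "lfact Oc = butlast (lfact Oc') @ [r @ last ss @ last (lfact Oc')]"
    and "std_fact (last (lfact Oc)) (r @ last ss) (last (lfact Oc'))"
proof -
  let ?os = "lfact Oc'"
  have "Ec' \<noteq> []" using step by (simp add: omega_step_def Let_def)
  then obtain e es where es: "lfact Ec' = e # es" by (rule lfact_Cons_if_nonempty)
  then have step': "\<not> ltI (lastopt ?os) (Some e)" "isf (lastopt ?os) e r ss"
      "leI (lastopt ?os) (Some (last ss))"
      "Oc = concat (butlast ?os) @ r @ last ss @ last ?os"
      "Ec = concat (rev (butlast ss)) @ concat es"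
    using step by (simp_all add: omega_step_def Let_def)
  then have "?os \<noteq> []" by (cases ?os) (auto simp: leI_def)
  then have "e \<le> last ?os" "isf (Some (last ?os)) e r ss" "last ?os \<le> last ss"
    using step' by (auto simp: lastopt_nonempty lex_less_iff_less leI_def)
  note new = omega_inv_step_P[OF inv[unfolded es] \<open>?os \<noteq> []\<close> this]
  have lfact_Oc: "lfact Oc = butlast ?os @ [r @ last ss @ last ?os]"
    using omega_inv_lfact(1)[OF new(1)] step'(4) by simp
  show "omega_inv (lfact Oc) (lfact Ec)"
    using new(1) omega_inv_lfact(2)[OF new(1)] lfact_Oc step'(5) by simp
  show "lfact Oc = butlast ?os @ [r @ last ss @ last ?os]" by (fact lfact_Oc)
  show "std_fact (last (lfact Oc)) (r @ last ss) (last ?os)"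
    using new(2) lfact_Oc by (simp add: std_fact_iff_min_suffix)
qed

lemma omega_step_F:
  assumes inv: "omega_inv (lfact Oc') (lfact Ec')"
    and step: "omega_step (Oc', Ec') StepF r ss (Oc, Ec)"
  shows "omega_inv (lfact Oc) (lfact Ec)" and "lfact Oc = lfact Oc' @ [last ss, r]"
proof -
  let ?os = "lfact Oc'"
  have "Ec' \<noteq> []" using step by (simp add: omega_step_def Let_def)
  then obtain e es where es: "lfact Ec' = e # es" by (rule lfact_Cons_if_nonempty)
  then have step': "isf (lastopt ?os) e r ss" "ltI (Some (last ss)) (lastopt ?os)"
      "Oc = Oc' @ last ss @ r" "Ec = concat (rev (butlast ss)) @ concat es"
    using step by (simp_all add: omega_step_def Let_def)
  note new = omega_inv_step_F[OF inv[unfolded es] step'(1,2)]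
  show lfact_Oc: "lfact Oc = ?os @ [last ss, r]"
    using omega_inv_lfact(1)[OF new] step'(3) by (simp add: concat_lfact)
  show "omega_inv (lfact Oc) (lfact Ec)"
    using new omega_inv_lfact(2)[OF new] lfact_Oc step'(4) by simp
qed

lemma omega_step_inv:
  assumes "omega_inv (lfact Oc') (lfact Ec')" and "omega_step (Oc', Ec') k r ss (Oc, Ec)"
  shows "omega_inv (lfact Oc) (lfact Ec)"
  using assms omega_step_S(1) omega_step_P(1) omega_step_F(1) by (cases k) blast+

lemma omega_inv_init:
  assumes "w \<in> We n"
  shows "omega_inv (lfact (fst (omega_init w))) (lfact (snd (omega_init w)))"
proof -
  let ?fs = "lfact w" and ?odd = "filter (\<lambda>f. odd (length f)) (lfact w)"
  have at_most_one: "length ?odd \<le> 1" and odd_single: "\<forall>f\<in>set ?fs. odd (length f) \<longrightarrow> length f = 1"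
    using assms by (auto simp: We_def)
  have fs: "\<forall>f\<in>set ?fs. lyndon f" "sorted_wrt (\<ge>) ?fs"
    using is_lfact_lfact[of w] by (auto simp: is_lfact_iff)
  have parity: "even (length w) \<longleftrightarrow> ?odd = []"
    using even_length_concat_iff[of ?fs] at_most_one concat_lfact[of w]
    by (cases ?odd) auto
  show ?thesis
  proof (cases "even (length w)")
    case True
    then have "\<forall>f\<in>set ?fs. even (length f)" using parity by (auto simp: filter_empty_conv)
    moreover have "lfact [] = ([] :: 'a list list)" by (rule lfact_eqI) (simp add: is_lfact_iff)
    ultimately show ?thesis using True fs by (simp add: omega_init_def omega_inv_def)
  next
    case False
    let ?G = "filter (\<lambda>f. length f \<noteq> 1) ?fs"
    have "filter (\<lambda>f. length f = 1) ?fs \<noteq> []"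
      using parity False odd_single by (auto simp: filter_empty_conv)
    then have "hd (filter (\<lambda>f. length f = 1) ?fs) \<in> set (filter (\<lambda>f. length f = 1) ?fs)"
      by (rule hd_in_set)
    then obtain a where a: "a = hd (filter (\<lambda>f. length f = 1) ?fs)" "a \<in> set ?fs" "length a = 1"
      by simp
    then obtain c where "a = [c]" by (auto simp: length_Suc_conv)
    have init: "omega_init w = (a, concat ?G)" using False a(1) by (simp add: omega_init_def)
    have "lfact a = [a]" by (rule lfact_eqI) (simp add: is_lfact_iff \<open>a = [c]\<close> lyndon_singleton)
    moreover have "lfact (concat ?G) = ?G"
      by (rule lfact_eqI) (use fs in \<open>auto simp: is_lfact_iff sorted_wrt_filter\<close>)
    moreover have "\<not> min_suffix a s" for s
      using psuffix_ne_length[of s a] \<open>length a = 1\<close> by (auto simp: min_suffix_def)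
    ultimately show ?thesis unfolding init omega_inv_def
      using fs odd_single \<open>a = [c]\<close> lyndon_singleton by (auto simp: sorted_wrt_filter)
  qed
qed

lemma omega_reach_inv:
  assumes "w \<in> We n" and "omega_reach w st"
  shows "omega_inv (lfact (fst st)) (lfact (snd st))"
proof -
  have "(omega_init w, st) \<in> {(x, y). \<exists>k r ss. omega_step x k r ss y}\<^sup>*"
    using assms(2) by (simp add: omega_reach_def)
  then show ?thesis
  proof (induction rule: rtrancl_induct)
    case base
    show ?case using omega_inv_init[OF assms(1)] .
  next
    case (step y z)
    then show ?case using omega_step_inv[of "fst y" "snd y"] by auto
  qed
qed

lemma omega_inv_less_penultimate:
  assumes inv: "omega_inv (lfact Oc) (lfact Ec)"
  shows "ltI (Some Ec)
    (if 2 \<le> length (lfact Oc) then Some (lfact Oc ! (length (lfact Oc) - 2)) else None)"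
proof (cases "2 \<le> length (lfact Oc)")
  case True
  let ?f = "lfact Oc ! (length (lfact Oc) - 2)"
  have "?f \<in> set (butlast (lfact Oc))"
    using True by (auto simp: in_set_conv_nth nth_butlast intro!: exI[of _ "length (lfact Oc) - 2"])
  then have "lyndon ?f" "\<forall>g\<in>set (lfact Ec). g < ?f"
    using inv by (auto simp: omega_inv_def dest: in_set_butlastD)
  then have "Ec < ?f" using concat_less_lyndon concat_lfact by metis
  then show ?thesis using True by (simp add: lex_less_iff_less)
qed simp

lemma omega_inv_hd_le_std_right:
  assumes inv: "omega_inv (lfact Oc) (lfact Ec)" and "lfact Oc \<noteq> []"
    and "std_fact (last (lfact Oc)) x y" and "Ec \<noteq> []"
  shows "lex_le (hd (lfact Ec)) y"
proof -
  obtain e es where "lfact Ec = e # es" using lfact_Cons_if_nonempty[OF \<open>Ec \<noteq> []\<close>] .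
  moreover have "min_suffix (last (lfact Oc)) y" using assms(3) std_fact_iff_min_suffix by blast
  ultimately show ?thesis
    using omega_inv_ConsD(8)[OF inv[unfolded \<open>lfact Ec = e # es\<close>] assms(2)]
    by (simp add: lex_le_iff_le)
qed

lemma omega_inv_distinct: "omega_inv os es \<Longrightarrow> distinct os"
  unfolding omega_inv_def by (metis distinct_rev sorted_wrt_rev strict_sorted_iff)

theorem lemma4p23:
  fixes w' Oc' Ec' Oc Ec r :: "'a::{linorder,finite} list" and ss :: "'a list list"
    and n :: nat and k :: step_kind
  assumes "w' \<in> We n"
    and "omega_reach w' (Oc', Ec')"
    and "omega_step (Oc', Ec') k r ss (Oc, Ec)"
  shows "(\<forall>e\<in>set (lfact Ec). even (length e))
    \<and> (\<forall>f\<in>set (lfact Oc). odd (length f)) \<and> distinct (lfact Oc)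
    \<and> (k = StepS \<longrightarrow> lfact Oc = butlast (lfact Oc') @ [last (lfact Oc') @ hd (lfact Ec')])
    \<and> (k = StepP \<longrightarrow> lfact Oc = butlast (lfact Oc') @ [r @ last ss @ last (lfact Oc')])
    \<and> (k = StepF \<longrightarrow> lfact Oc = lfact Oc' @ [last ss, r])
    \<and> ltI (Some Ec) (if 2 \<le> length (lfact Oc) then Some (lfact Oc ! (length (lfact Oc) - 2)) else None)
    \<and> (\<forall>x y. lfact Oc \<noteq> [] \<longrightarrow> 2 \<le> length (last (lfact Oc)) \<longrightarrow> std_fact (last (lfact Oc)) x y
          \<longrightarrow> Ec \<noteq> [] \<longrightarrow> lex_le (hd (lfact Ec)) y)
    \<and> (k = StepS \<longrightarrow> std_fact (last (lfact Oc)) (last (lfact Oc')) (hd (lfact Ec')))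
    \<and> (k = StepP \<longrightarrow> std_fact (last (lfact Oc)) (r @ last ss) (last (lfact Oc')))"
proof -
  have inv': "omega_inv (lfact Oc') (lfact Ec')" using omega_reach_inv[OF assms(1,2)] by simp
  have inv: "omega_inv (lfact Oc) (lfact Ec)" using omega_step_inv[OF inv' assms(3)] .
  have parities: "\<forall>e\<in>set (lfact Ec). even (length e)" "\<forall>f\<in>set (lfact Oc). odd (length f)"
    using inv by (simp_all add: omega_inv_def)
  show ?thesis
    using parities omega_inv_distinct[OF inv] omega_inv_less_penultimate[OF inv]
      omega_inv_hd_le_std_right[OF inv] assms(3) omega_step_S(2,3)[OF inv'] omega_step_P(2,3)[OF inv']
      omega_step_F(2)[OF inv']
    by (cases k) auto
qed

end
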